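(* $$\lim_{p\downarrow0}\ \limsup_{n\to\infty}\frac{H_n(p)}{n}=0\quad\text{a.s.}$$
   Context: Bernoulli hail graph $\mathcal G(p)$, $p\in(0,1]$: nodes are pairs $(i,n)$, $i\in\mathbb Z$, $n\in\{1,2,\dots\}$. First define $\mathcal G(1)$: for each $n$ and $i$, independently, there is either an edge $(i,n)\to(i+1,n)$ or an edge $(i+1,n)\to(i,n)$, each with probability $1/2$ (spatial edges); for all $i$ and $n\ge2$ there are edges $(i,n)\to(i-1,n-1)$, $(i,n)\to(i,n-1)$, $(i,n)\to(i+1,n-1)$ (time edges). $\mathcal G(p)$ is obtained by coloring each node black with probability $p$ and white with probability $1-p$, independently of everything else; for each white node, its outgoing spatial edges are deleted and its time edges to $(i\pm1,n-1)$ are deleted (only $(i,n)\to(i,n-1)$ is kept). The graphs for different $p$ are naturally coupled (e.g. via uniform variables for the colors) so that $\mathcal G(p)\subseteq\mathcal G(q)$ for $p\le q$. A path is a sequence of nodes joined by directed edges present in $\mathcal G(p)$. The height of a black node is $1$, of a white node $0$; the height of a path is the sum of heights of its nodes. $H^i_n=H^i_n(p)$ is the maximal height of all paths of $\mathcal G(p)$ starting from $(i,n)$; its law does not depend on $i$ and we write $H_n=H_n(p)$. *)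

theory Defs
  imports "HOL-Probability.Probability"
begin

type_synonym node = "int \<times> nat"
type_synonym env = "node \<Rightarrow> real \<times> bool"

text \<open>Randomness: each node (i,n) carries an independent pair (U, D), where U is uniform on [0,1]
 (colour: black in G(p) iff U \<le> p) and D is a fair coin (True: spatial edge (i,n)->(i+1,n),
 False: spatial edge (i+1,n)->(i,n)). Nodes with n = 0 carry unused variables.\<close>
definition hail_space :: "env measure" where
  "hail_space = PiM UNIV (\<lambda>_. uniform_measure lborel {0..1::real} \<Otimes>\<^sub>M measure_pmf (bernoulli_pmf (1/2)))"

definition black :: "real \<Rightarrow> env \<Rightarrow> node \<Rightarrow> bool" where
  "black p \<omega> x \<longleftrightarrow> fst (\<omega> x) \<le> p"

definition hail_edge :: "real \<Rightarrow> env \<Rightarrow> node \<Rightarrow> node \<Rightarrow> bool" where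
  "hail_edge p \<omega> x y \<longleftrightarrow> snd x \<ge> 1 \<and> snd y \<ge> 1 \<and>
     ((black p \<omega> x \<and> y = (fst x + 1, snd x) \<and> snd (\<omega> x)) \<or>
      (black p \<omega> x \<and> y = (fst x - 1, snd x) \<and> \<not> snd (\<omega> y)) \<or>
      (snd x \<ge> 2 \<and> y = (fst x, snd x - 1)) \<or>
      (black p \<omega> x \<and> snd x \<ge> 2 \<and> (y = (fst x - 1, snd x - 1) \<or> y = (fst x + 1, snd x - 1))))"

definition hail_path :: "real \<Rightarrow> env \<Rightarrow> node list \<Rightarrow> bool" where
  "hail_path p \<omega> xs \<longleftrightarrow> xs \<noteq> [] \<and> (\<forall>k. Suc k < length xs \<longrightarrow> hail_edge p \<omega> (xs ! k) (xs ! Suc k))"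

definition path_height :: "real \<Rightarrow> env \<Rightarrow> node list \<Rightarrow> nat" where
  "path_height p \<omega> xs = length (filter (black p \<omega>) xs)"

definition Hmax :: "real \<Rightarrow> env \<Rightarrow> node \<Rightarrow> enat" where
  "Hmax p \<omega> x = (SUP xs \<in> {xs. hail_path p \<omega> xs \<and> xs ! 0 = x}. enat (path_height p \<omega> xs))"

definition Hn :: "real \<Rightarrow> env \<Rightarrow> nat \<Rightarrow> enat" where
  "Hn p \<omega> n = Hmax p \<omega> (0, n)"

end

theory Submission
  imports Defs
begin

(* For small p the hail graph is so sparse in black nodes that a path from level n can collect
   only about p-proportionally many of them: we show that for p_K = 1/(12 * 24^K) almost surely
   H_n(p_K) <= n div K for all large n, whence limsup H_n(p)/n <= 1/K for every p <= p_K.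

   The argument is a first-moment (Peierls-type) estimate.
   (1) Paths are self-avoiding: levels never increase, and on a fixed level a path moves in one
       horizontal direction, since each spatial bond has a single orientation.
   (2) A path starting at level n visits at most n white nodes, so if it has m black nodes, some
       prefix of length at most n + m already contains m black nodes.
   (3) Such a prefix is encoded by a word of length <= n + m over a 6-letter alphabet (one
       letter per step, 0 for a white node); the word determines m distinct nodes that must all
       be black. There are at most 12^(n+m) words, each event has probability p^m, so
       P(H_n(p) >= m) <= 12^(n+m) p^m.
   (4) With m = n div K + 1 and p = p_K these bounds are summable, and Borel-Cantelli together
       with the monotonicity of H_n(p) in p gives the theorem. *)

abbreviation node_law :: "(real \<times> bool) measure" where
  "node_law \<equiv> uniform_measure lborel {0..1::real} \<Otimes>\<^sub>M measure_pmf (bernoulli_pmf (1/2))"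

lemma prob_space_node_law: "prob_space node_law"
proof -
  have "prob_space (uniform_measure lborel {0..1::real})"
    by (rule prob_space_uniform_measure) auto
  then show ?thesis
    by (intro prob_space_pair) (auto simp: prob_space_measure_pmf)
qed

lemma prob_space_hail: "prob_space hail_space"
  unfolding hail_space_def by (rule prob_space_PiM) (rule prob_space_node_law)

lemma node_law_black: assumes "0 \<le> p" "p \<le> 1"
  shows "emeasure node_law ({..p} \<times> UNIV) = ennreal p"
proof -
  have "emeasure node_law ({..p} \<times> UNIV) =
      emeasure (uniform_measure lborel {0..1::real}) {..p} * emeasure (measure_pmf (bernoulli_pmf (1/2))) UNIV"
    by (subst measure_pmf.emeasure_pair_measure_Times) auto
  also have "\<dots> = ennreal p" using assms
    by (simp add: measure_pmf.emeasure_space_1[simplified] Int_commute divide_ennreal_def)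
  finally show ?thesis .
qed

definition all_black :: "real \<Rightarrow> node set \<Rightarrow> env set" where
  "all_black p T = {\<omega>. \<forall>x\<in>T. black p \<omega> x}"

lemma all_black_emb: "all_black p T = prod_emb UNIV (\<lambda>_. node_law) T (PiE T (\<lambda>_. {..p} \<times> UNIV))"
  unfolding all_black_def black_def prod_emb_def
  by (auto simp: space_pair_measure PiE_def extensional_def Pi_def mem_Times_iff)

lemma all_black_sets: "finite T \<Longrightarrow> all_black p T \<in> sets hail_space"
  unfolding all_black_emb hail_space_def by (rule sets_PiM_I) auto

lemma measure_all_black: assumes "finite T" "0 \<le> p" "p \<le> 1"
  shows "measure hail_space (all_black p T) = p ^ card T"
proof -
  have "emeasure hail_space (all_black p T) = (\<Prod>i\<in>T. emeasure node_law ({..p} \<times> UNIV))"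
    unfolding all_black_emb hail_space_def
    by (rule emeasure_PiM_emb) (use assms prob_space_node_law in auto)
  also have "\<dots> = ennreal (p ^ card T)" using assms by (simp add: node_law_black ennreal_power)
  finally show ?thesis using assms by (simp add: measure_def)
qed

lemma edge_level:
  "hail_edge p \<omega> x y \<Longrightarrow> snd y < snd x \<or> (black p \<omega> x \<and> snd y = snd x)"
  unfolding hail_edge_def by auto

lemma edge_same_level:
  assumes "hail_edge p \<omega> x y" "snd y = snd x"
  obtains \<delta> :: int where "\<bar>\<delta>\<bar> = 1" "y = (fst x + \<delta>, snd x)"
  using assms unfolding hail_edge_def by (auto simp: prod_eq_iff)

(* Two consecutive horizontal steps go in the same direction: turning back would cross the
   spatial bond between the two nodes in both orientations. *)
lemma no_backtrack:
  assumes "hail_edge p \<omega> x y" "hail_edge p \<omega> y z"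
    and "y = (fst x + \<delta>, snd x)" "z = (fst y + \<delta>', snd y)" "\<bar>\<delta>\<bar> = 1" "\<bar>\<delta>'\<bar> = 1"
  shows "\<delta>' = \<delta>"
  using assms unfolding hail_edge_def by (auto simp: prod_eq_iff abs_if split: if_splits)

lemma path_edge: "hail_path p \<omega> xs \<Longrightarrow> Suc k < length xs \<Longrightarrow> hail_edge p \<omega> (xs!k) (xs!Suc k)"
  unfolding hail_path_def by auto

lemma path_level_antimono:
  assumes "hail_path p \<omega> xs" "i \<le> j" "j < length xs"
  shows "snd (xs!j) \<le> snd (xs!i)"
  using assms(2,3)
proof (induction j rule: dec_induct)
  case (step j)
  then show ?case using edge_level[OF path_edge[OF assms(1), of j]] by fastforce
qed simp

lemma horizontal_run:
  assumes P: "hail_path p \<omega> xs" and "i + Suc d < length xs"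
    and "snd (xs!(i + Suc d)) = snd (xs!i)"
  shows "\<exists>\<delta>. \<bar>\<delta>\<bar> = 1 \<and> fst (xs!(i + Suc d)) = fst (xs!i) + \<delta> * int (Suc d)
     \<and> xs!(i + Suc d) = (fst (xs!(i + d)) + \<delta>, snd (xs!(i + d)))"
  using assms(2,3)
proof (induction d)
  case 0
  have "hail_edge p \<omega> (xs!i) (xs!Suc i)" using path_edge[OF P] 0 by simp
  then obtain \<delta> where "\<bar>\<delta>\<bar> = 1" "xs!Suc i = (fst (xs!i) + \<delta>, snd (xs!i))"
    using edge_same_level 0 by (metis add_Suc_right add_0_right)
  then show ?case by auto
next
  case (Suc d)
  let ?j = "i + Suc d"
  have "snd (xs!(Suc ?j)) \<le> snd (xs!?j)" "snd (xs!?j) \<le> snd (xs!i)"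
    using path_level_antimono[OF P, of ?j "Suc ?j"] path_level_antimono[OF P, of i ?j] Suc.prems
    by simp_all
  then have lev: "snd (xs!?j) = snd (xs!i)" "snd (xs!Suc ?j) = snd (xs!?j)"
    using Suc.prems by auto
  obtain \<delta> where \<delta>: "\<bar>\<delta>\<bar> = 1" "fst (xs!?j) = fst (xs!i) + \<delta> * int (Suc d)"
      "xs!?j = (fst (xs!(i + d)) + \<delta>, snd (xs!(i + d)))"
    using Suc.IH Suc.prems lev by auto
  have E: "hail_edge p \<omega> (xs!?j) (xs!Suc ?j)" using path_edge[OF P] Suc.prems by simp
  obtain \<delta>' where \<delta>': "\<bar>\<delta>'\<bar> = 1" "xs!Suc ?j = (fst (xs!?j) + \<delta>', snd (xs!?j))"
    using edge_same_level[OF E lev(2)] by blast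
  have "hail_edge p \<omega> (xs!(i + d)) (xs!?j)" using path_edge[OF P, of "i + d"] Suc.prems by simp
  then have "\<delta>' = \<delta>" using no_backtrack[OF _ E \<delta>(3) \<delta>'(2) \<delta>(1) \<delta>'(1)] by simp
  then show ?case using \<delta> \<delta>' by (auto simp: algebra_simps)
qed

lemma path_distinct:
  assumes P: "hail_path p \<omega> xs" and "i < j" "j < length xs"
  shows "xs!i \<noteq> xs!j"
proof
  assume eq: "xs!i = xs!j"
  obtain d where j: "j = i + Suc d" using \<open>i < j\<close> less_iff_Suc_add by auto
  obtain \<delta> :: int where "\<bar>\<delta>\<bar> = 1" "fst (xs!j) = fst (xs!i) + \<delta> * int (Suc d)"
    using horizontal_run[OF P, of i d] assms eq j by auto
  then show False using eq by (auto simp: abs_if)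
qed

lemma path_height_snoc:
  "path_height p \<omega> (xs @ [x]) = path_height p \<omega> xs + (if black p \<omega> x then 1 else 0)"
  unfolding path_height_def by simp

lemma path_height_take:
  assumes "L \<le> length xs"
  shows "path_height p \<omega> (take L xs) = card {k. k < L \<and> black p \<omega> (xs!k)}"
  unfolding path_height_def length_filter_conv_card using assms by (auto intro: arg_cong[where f = card])

(* Every white node forces a step down, so after k steps the level has dropped by at least
   the number of white nodes among the first k. *)
lemma path_descent:
  assumes P: "hail_path p \<omega> xs"
  shows "k < length xs \<Longrightarrow> k + snd (xs!k) \<le> snd (xs!0) + path_height p \<omega> (take k xs)"
proof (induction k)
  case (Suc k)
  have "snd (xs!Suc k) < snd (xs!k) \<or> (black p \<omega> (xs!k) \<and> snd (xs!Suc k) = snd (xs!k))"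
    using edge_level[OF path_edge[OF P]] Suc.prems by blast
  then show ?case
    using Suc by (auto simp: take_Suc_conv_app_nth path_height_snoc)
qed (simp add: path_height_def)

(* A path from level n containing m >= 1 black nodes has a prefix of length at most n + m that
   already contains m black nodes (its shortest such prefix has at most n white nodes). *)
lemma short_prefix:
  assumes P: "hail_path p \<omega> xs" and start: "snd (xs!0) = n"
    and m: "1 \<le> m" "m \<le> path_height p \<omega> xs"
  obtains L where "L \<le> length xs" "L \<le> n + m" "m \<le> path_height p \<omega> (take L xs)"
proof
  define L where "L = (LEAST L. m \<le> path_height p \<omega> (take L xs))"
  show high: "m \<le> path_height p \<omega> (take L xs)"
    unfolding L_def by (rule LeastI[of _ "length xs"]) (use m in simp)
  show len: "L \<le> length xs"
    unfolding L_def by (rule Least_le) (use m in simp)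
  have "L \<noteq> 0"
  proof
    assume "L = 0"
    then show False using high m by (simp add: path_height_def)
  qed
  then have "\<not> m \<le> path_height p \<omega> (take (L - 1) xs)"
    unfolding L_def by (intro not_less_Least) (simp add: L_def)
  moreover have "L - 1 + snd (xs!(L - 1)) \<le> n + path_height p \<omega> (take (L - 1) xs)"
    using path_descent[OF P, of "L - 1"] len \<open>L \<noteq> 0\<close> start by simp
  ultimately show "L \<le> n + m" by linarith
qed

(* Encoding of paths by words over the alphabet {0..5}: letter 0 marks a white node (which
   steps down); letters 1..5 mark a black node and choose one of its five possible steps.
   word_pos s w k is the node reached from s after reading the first k letters. *)
definition move :: "node \<Rightarrow> nat \<Rightarrow> node" where
  "move x l = (if l = 1 then (fst x + 1, snd x) else if l = 2 then (fst x - 1, snd x)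
     else if l = 4 then (fst x - 1, snd x - 1) else if l = 5 then (fst x + 1, snd x - 1)
     else (fst x, snd x - 1))"

definition word_pos :: "node \<Rightarrow> nat list \<Rightarrow> nat \<Rightarrow> node" where
  "word_pos s w k = foldl move s (take k w)"

definition marked :: "nat list \<Rightarrow> nat set" where
  "marked w = {k. k < length w \<and> w!k \<noteq> 0}"

definition letter_of :: "bool \<Rightarrow> node \<Rightarrow> node \<Rightarrow> nat" where
  "letter_of b x y = (if \<not> b then 0 else if y = (fst x + 1, snd x) then 1
     else if y = (fst x - 1, snd x) then 2 else if y = (fst x, snd x - 1) then 3
     else if y = (fst x - 1, snd x - 1) then 4 else 5)"

definition path_word :: "real \<Rightarrow> env \<Rightarrow> node list \<Rightarrow> nat \<Rightarrow> nat list" where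
  "path_word p \<omega> xs L = map (\<lambda>k. letter_of (black p \<omega> (xs!k)) (xs!k) (xs!Suc k)) [0..<L]"

lemma letter_of_pos: "0 < letter_of b x y \<longleftrightarrow> b"
  by (simp add: letter_of_def)

lemma move_letter_of:
  "hail_edge p \<omega> x y \<Longrightarrow> move x (letter_of (black p \<omega> x) x y) = y"
  unfolding hail_edge_def letter_of_def move_def by (auto simp: prod_eq_iff)

lemma path_word_decodes:
  assumes P: "hail_path p \<omega> xs" and "L \<le> length xs" "k < L"
  shows "word_pos (xs!0) (path_word p \<omega> xs L) k = xs!k"
  using assms(3)
proof (induction k)
  case (Suc k)
  have "word_pos (xs!0) (path_word p \<omega> xs L) (Suc k) =
      move (xs!k) (letter_of (black p \<omega> (xs!k)) (xs!k) (xs!Suc k))"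
    using Suc by (simp add: word_pos_def path_word_def take_Suc_conv_app_nth)
  also have "\<dots> = xs!Suc k"
    using move_letter_of[OF path_edge[OF P]] Suc.prems assms(2) by simp
  finally show ?case .
qed (simp add: word_pos_def)

lemma marked_path_word: "marked (path_word p \<omega> xs L) = {k. k < L \<and> black p \<omega> (xs!k)}"
  unfolding marked_def path_word_def by (auto simp: letter_of_pos)

definition Words :: "nat \<Rightarrow> nat \<Rightarrow> nat list set" where
  "Words n m = {w. set w \<subseteq> {0..5} \<and> length w \<le> n + m \<and>
     inj_on (word_pos (0, n) w) (marked w) \<and> m \<le> card (marked w)}"

definition high_event :: "real \<Rightarrow> nat \<Rightarrow> nat \<Rightarrow> env set" where
  "high_event p n m = (\<Union>w\<in>Words n m. all_black p (word_pos (0, n) w ` marked w))"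

lemma high_path_in_event:
  assumes P: "hail_path p \<omega> xs" and start: "xs!0 = (0, n)"
    and m: "1 \<le> m" "m \<le> path_height p \<omega> xs"
  shows "\<omega> \<in> high_event p n m"
proof -
  obtain L where L: "L \<le> length xs" "L \<le> n + m" "m \<le> path_height p \<omega> (take L xs)"
    using short_prefix[OF P _ m] start by auto
  define w where "w = path_word p \<omega> xs L"
  have pos: "word_pos (0, n) w k = xs!k" if "k < L" for k
    using path_word_decodes[OF P L(1) that] start by (simp add: w_def)
  have marked: "marked w = {k. k < L \<and> black p \<omega> (xs!k)}"
    unfolding w_def by (rule marked_path_word)
  have "inj_on (word_pos (0, n) w) (marked w)"
  proof (rule inj_onI)
    fix a b assume "a \<in> marked w" "b \<in> marked w" "word_pos (0, n) w a = word_pos (0, n) w b"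
    then show "a = b"
      using path_distinct[OF P, of a b] path_distinct[OF P, of b a] pos L(1) marked
      by (cases a b rule: linorder_cases) auto
  qed
  then have "w \<in> Words n m"
    using L marked path_height_take[OF L(1)]
    by (auto simp: Words_def w_def path_word_def letter_of_def)
  moreover have "\<omega> \<in> all_black p (word_pos (0, n) w ` marked w)"
    unfolding all_black_def using marked pos by auto
  ultimately show ?thesis unfolding high_event_def by blast
qed

lemma Hn_le_of_not_high:
  assumes m: "1 \<le> m" and not_high: "\<omega> \<notin> high_event p n m"
  shows "Hn p \<omega> n \<le> enat (m - 1)"
  unfolding Hn_def Hmax_def
proof (rule SUP_least)
  fix xs assume "xs \<in> {xs. hail_path p \<omega> xs \<and> xs ! 0 = (0, n)}"
  then have "\<not> m \<le> path_height p \<omega> xs"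
    using high_path_in_event[of p \<omega> xs n m] m not_high by auto
  then show "enat (path_height p \<omega> xs) \<le> enat (m - 1)" by simp
qed

lemma Words_subset: "Words n m \<subseteq> {w. set w \<subseteq> {0..5} \<and> length w \<le> n + m}"
  unfolding Words_def by auto

lemma finite_Words: "finite (Words n m)"
  by (rule finite_subset[OF Words_subset finite_lists_length_le]) simp

(* There are at most (n + m + 1) 6^(n+m) <= 12^(n+m) candidate words. *)
lemma card_Words: "card (Words n m) \<le> 12 ^ (n + m)"
proof -
  let ?N = "n + m"
  have "card (Words n m) \<le> card {w. set w \<subseteq> {0..5::nat} \<and> length w \<le> ?N}"
    by (rule card_mono[OF finite_lists_length_le Words_subset]) simp
  also have "\<dots> = (\<Sum>i\<le>?N. 6 ^ i)" by (subst card_lists_length_le) auto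
  also have "\<dots> \<le> (\<Sum>i\<le>?N. 6 ^ ?N)" by (rule sum_mono) (simp add: power_increasing)
  also have "\<dots> = (?N + 1) * 6 ^ ?N" by simp
  also have "\<dots> \<le> 2 ^ ?N * 6 ^ ?N"
    using less_exp[of ?N] by (intro mult_right_mono) (simp_all add: Suc_le_eq)
  also have "\<dots> = 12 ^ ?N" by (simp flip: power_mult_distrib)
  finally show ?thesis .
qed

lemma finite_marked: "finite (marked w)"
  unfolding marked_def by simp

lemma high_event_sets: "high_event p n m \<in> sets hail_space"
  unfolding high_event_def
  by (rule sets.finite_UN) (auto intro!: all_black_sets simp: finite_Words finite_marked)

lemma measure_high_event:
  assumes p: "0 \<le> p" "p \<le> 1"
  shows "measure hail_space (high_event p n m) \<le> 12 ^ (n + m) * p ^ m"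
proof -
  interpret prob_space hail_space by (rule prob_space_hail)
  have "measure hail_space (high_event p n m)
      \<le> (\<Sum>w\<in>Words n m. measure hail_space (all_black p (word_pos (0, n) w ` marked w)))"
    unfolding high_event_def
    by (rule finite_measure_subadditive_finite)
       (auto intro!: all_black_sets simp: finite_Words finite_marked)
  also have "\<dots> \<le> (\<Sum>w\<in>Words n m. p ^ m)"
  proof (rule sum_mono)
    fix w assume "w \<in> Words n m"
    then have "card (word_pos (0, n) w ` marked w) = card (marked w)" "m \<le> card (marked w)"
      unfolding Words_def by (auto simp: card_image)
    then show "measure hail_space (all_black p (word_pos (0, n) w ` marked w)) \<le> p ^ m"
      using measure_all_black[of "word_pos (0, n) w ` marked w" p] p finite_marked
      by (simp add: power_decreasing)
  qed
  also have "\<dots> \<le> 12 ^ (n + m) * p ^ m"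
  proof -
    have "real (card (Words n m)) \<le> 12 ^ (n + m)"
      using card_Words[of n m] by (metis of_nat_le_iff of_nat_numeral of_nat_power)
    then show ?thesis using p by (simp add: mult_right_mono)
  qed
  finally show ?thesis .
qed

(* A density small enough that heights above n/K are summably unlikely. *)
definition small_p :: "nat \<Rightarrow> real" where
  "small_p K = 1 / (12 * 24 ^ K)"

lemma small_p_pos: "0 < small_p K"
  unfolding small_p_def by simp

lemma small_p_le_1: "small_p K \<le> 1"
proof -
  have "1 \<le> 12 * (24::real) ^ K" using one_le_power[of "24::real" K] by linarith
  then show ?thesis unfolding small_p_def by simp
qed

lemma small_p_bound:
  assumes K: "1 \<le> K"
  shows "12 ^ (n + (n div K + 1)) * small_p K ^ (n div K + 1) \<le> (1/2::real) ^ n"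
proof -
  define m where "m = n div K + 1"
  have "K * (n div K) + n mod K = n" "n mod K < K" "K * m = K * (n div K) + K"
    using K by (simp_all add: m_def)
  then have "n \<le> K * m" by linarith
  have "12 ^ (n + m) * small_p K ^ m = (12::real) ^ n / 24 ^ (K * m)"
    by (simp add: small_p_def power_add power_mult_distrib power_mult power_one_over)
  also have "\<dots> \<le> 12 ^ n / 24 ^ n"
    using power_increasing[OF \<open>n \<le> K * m\<close>, of "24::real"] by (intro divide_left_mono) auto
  also have "\<dots> = (1/2) ^ n" by (simp flip: power_divide)
  finally show ?thesis unfolding m_def .
qed

lemma AE_Hn_small_p:
  assumes K: "1 \<le> K"
  shows "AE \<omega> in hail_space. eventually (\<lambda>n. Hn (small_p K) \<omega> n \<le> enat (n div K)) sequentially"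
proof -
  interpret prob_space hail_space by (rule prob_space_hail)
  let ?A = "\<lambda>n. high_event (small_p K) n (n div K + 1)"
  have "AE \<omega> in hail_space. eventually (\<lambda>n. \<omega> \<in> space hail_space - ?A n) sequentially"
  proof (rule borel_cantelli_AE1)
    show "?A n \<in> sets hail_space" for n by (rule high_event_sets)
    show "emeasure hail_space (?A n) < \<infinity>" for n by (simp add: less_top[symmetric])
    show "summable (\<lambda>n. measure hail_space (?A n))"
    proof (rule summable_comparison_test'[where g = "\<lambda>n. (1/2::real) ^ n" and N = 0])
      show "summable (\<lambda>n. (1/2::real) ^ n)" by (rule summable_geometric) simp
      fix n :: nat
      have "measure hail_space (?A n) \<le> 12 ^ (n + (n div K + 1)) * small_p K ^ (n div K + 1)"
        using small_p_pos[of K] small_p_le_1[of K] by (intro measure_high_event) auto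
      also have "\<dots> \<le> (1/2) ^ n" by (rule small_p_bound[OF K])
      finally show "norm (measure hail_space (?A n)) \<le> (1/2) ^ n" by simp
    qed
  qed
  then show ?thesis
  proof (rule AE_mp, intro AE_I2 impI)
    fix \<omega> assume "eventually (\<lambda>n. \<omega> \<in> space hail_space - ?A n) sequentially"
    then show "eventually (\<lambda>n. Hn (small_p K) \<omega> n \<le> enat (n div K)) sequentially"
      by (rule eventually_mono) (use Hn_le_of_not_high[of "n div K + 1" for n] in auto)
  qed
qed

lemma Hn_mono:
  assumes "p \<le> q"
  shows "Hn p \<omega> n \<le> Hn q \<omega> n"
proof -
  have edge: "hail_edge p \<omega> x y \<Longrightarrow> hail_edge q \<omega> x y" for x y
    using assms unfolding hail_edge_def black_def by auto
  have path: "hail_path p \<omega> xs \<Longrightarrow> hail_path q \<omega> xs" for xs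
    unfolding hail_path_def using edge by blast
  have height: "path_height p \<omega> xs \<le> path_height q \<omega> xs" for xs
    unfolding path_height_def length_filter_conv_card
    using assms by (intro card_mono) (auto simp: black_def)
  show ?thesis
    unfolding Hn_def Hmax_def
    by (rule SUP_mono) (use path height in auto)
qed

lemma limsup_ratio_nonneg: "0 \<le> limsup (\<lambda>n. ereal_of_enat (h n) / ereal (real n))"
  by (rule le_Limsup) (auto intro: zero_le_divide_ereal)

lemma limsup_ratio_le:
  assumes K: "1 \<le> K" and h: "eventually (\<lambda>n. h n \<le> enat (n div K)) sequentially"
  shows "limsup (\<lambda>n. ereal_of_enat (h n) / ereal (real n)) \<le> ereal (1 / real K)"
proof (rule Limsup_bounded)
  show "eventually (\<lambda>n. ereal_of_enat (h n) / ereal (real n) \<le> ereal (1 / real K)) sequentially"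
    using h eventually_ge_at_top[of 1]
  proof (rule eventually_elim2)
    fix n :: nat assume "h n \<le> enat (n div K)" "1 \<le> n"
    then obtain a where a: "h n = enat a" "a \<le> n div K" by (cases "h n") auto
    then have "real a * real K \<le> real n"
      using div_times_less_eq_dividend[of n K] by (metis le_trans mult_le_mono1 of_nat_le_iff of_nat_mult)
    then show "ereal_of_enat (h n) / ereal (real n) \<le> ereal (1 / real K)"
      using a \<open>1 \<le> n\<close> K by (simp add: field_simps)
  qed
qed

lemma tendsto_zero_at_right_ereal:
  fixes f :: "real \<Rightarrow> ereal"
  assumes nonneg: "\<And>p. 0 \<le> f p"
    and small: "\<And>K. \<exists>\<delta>>0. \<forall>p. p < \<delta> \<longrightarrow> f p \<le> ereal (1 / real (Suc K))"
  shows "(f \<longlongrightarrow> 0) (at_right 0)"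
proof (rule order_tendstoI)
  fix a :: ereal assume "a < 0"
  then show "eventually (\<lambda>p. a < f p) (at_right 0)"
    using nonneg by (intro always_eventually) (metis order_less_le_trans)
next
  fix b :: ereal assume "0 < b"
  obtain K where K: "ereal (1 / real (Suc K)) < b"
  proof (cases b)
    case (real r)
    then obtain N where "0 < N" "inverse (real N) < r"
      using \<open>0 < b\<close> ex_inverse_of_nat_less by auto
    then show ?thesis using that[of "N - 1"] real by (simp add: inverse_eq_divide)
  qed (use \<open>0 < b\<close> that[of 0] in auto)
  obtain \<delta> where "\<delta> > 0" "\<forall>p. p < \<delta> \<longrightarrow> f p \<le> ereal (1 / real (Suc K))"
    using small by blast
  then show "eventually (\<lambda>p. f p < b) (at_right 0)"
    unfolding eventually_at_right_field using K by (auto intro: order_le_less_trans)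
qed

theorem lemma7:
  shows "AE \<omega> in hail_space.
    ((\<lambda>p. limsup (\<lambda>n. ereal_of_enat (Hn p \<omega> n) / ereal (real n))) \<longlongrightarrow> 0) (at_right 0)"
proof -
  have "AE \<omega> in hail_space. \<forall>K. eventually (\<lambda>n. Hn (small_p (Suc K)) \<omega> n \<le> enat (n div Suc K)) sequentially"
    unfolding AE_all_countable by (intro allI AE_Hn_small_p) simp
  then show ?thesis
  proof (rule AE_mp, intro AE_I2 impI tendsto_zero_at_right_ereal limsup_ratio_nonneg)
    fix \<omega> K
    assume H: "\<forall>K. eventually (\<lambda>n. Hn (small_p (Suc K)) \<omega> n \<le> enat (n div Suc K)) sequentially"
    have "limsup (\<lambda>n. ereal_of_enat (Hn p \<omega> n) / ereal (real n)) \<le> ereal (1 / real (Suc K))"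
      if "p < small_p (Suc K)" for p
    proof (rule limsup_ratio_le)
      have mono: "Hn p \<omega> n \<le> Hn (small_p (Suc K)) \<omega> n" for n
        using Hn_mono that by simp
      show "eventually (\<lambda>n. Hn p \<omega> n \<le> enat (n div Suc K)) sequentially"
        using H[rule_format, of K] by (rule eventually_mono) (rule order_trans[OF mono])
    qed simp
    then show "\<exists>\<delta>>0. \<forall>p. p < \<delta> \<longrightarrow>
        limsup (\<lambda>n. ereal_of_enat (Hn p \<omega> n) / ereal (real n)) \<le> ereal (1 / real (Suc K))"
      using small_p_pos by blast
  qed
qed

end
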